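(* Let $M\ge 2N-1$. Then for a generic $M$-element frame $\mathcal F$ for $\mathbb R^N$, the map $\mathbb M^{\mathcal F}$ is injective; that is, there is an open dense subset of the set of $M$-element frames for $\mathbb R^N$ such that for every $\mathcal F=\{f_1,\dots,f_M\}$ in it, $|\langle x,f_k\rangle|=|\langle y,f_k\rangle|$ for all $k$ implies $y=\pm x$.
   Context: An $M$-element frame for $\mathbb R^N$ is a family $\{f_1,\dots,f_M\}\subset\mathbb R^N$ spanning $\mathbb R^N$ (equivalently an $N\times M$ real matrix of rank $N$), with the topology induced from its range of coefficients $W=\{(\langle x,f_k\rangle)_k : x\in\mathbb R^N\}$ in the Grassmannian $Gr(N,M)$ of $N$-dimensional subspaces of $\mathbb R^M$. $\mathbb M^{\mathcal F}:\mathbb R^N/\{\pm1\}\to\mathbb R^M$, $\mathbb M^{\mathcal F}(\hat x)=(|\langle x,f_k\rangle|)_{k=1}^M$. *)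

theory Defs
  imports "HOL-Analysis.Analysis"
begin

text \<open>An M-element frame for R^N is represented as an N x M real matrix
  F :: real^'m^'n whose columns f_k = column k F span R^N.\<close>

definition is_frame :: "real^'m^'n \<Rightarrow> bool" where
  "is_frame F \<longleftrightarrow> span (range (\<lambda>k. column k F)) = UNIV"

definition frames :: "(real^'m^'n) set" where
  "frames = {F. is_frame F}"

definition coeff_range :: "real^'m^'n \<Rightarrow> (real^'m) set" where
  "coeff_range F = range (\<lambda>x::real^'n. \<chi> k. x \<bullet> column k F)"

text \<open>Topology on frames induced from the Grassmannian Gr(N,M) via F \<mapsto> W(F).
  The Grassmannian carries its standard topology, i.e. the quotient topology of the
  full-rank matrices (Euclidean topology) under F \<mapsto> W(F).  Hence a set of frames
  is open in the induced (pull-back) topology iff it is of the form W^{-1}(V) with V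
  open in Gr(N,M), iff it is open in the Euclidean subspace topology of the frames
  and saturated (a union of fibres of W).\<close>

definition frame_open :: "(real^'m^'n) set \<Rightarrow> bool" where
  "frame_open U \<longleftrightarrow>
     U \<subseteq> frames \<and>
     openin (top_of_set frames) U \<and>
     (\<forall>F\<in>U. \<forall>G\<in>frames. coeff_range G = coeff_range F \<longrightarrow> G \<in> U)"

definition frame_dense :: "(real^'m^'n) set \<Rightarrow> bool" where
  "frame_dense U \<longleftrightarrow> (\<forall>V. frame_open V \<and> V \<noteq> {} \<longrightarrow> U \<inter> V \<noteq> {})"

end

theory Submission
  imports Defs
begin

text \<open>A frame is generic when it has full spark: every N of its M vectors form a basis of R^N.
  Full spark means that finitely many N x N minors of the N x M matrix do not vanish; each
  minor is a polynomial in the entries that is not identically zero, so full spark frames form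
  an open dense set. Full spark depends only on the range of coefficients W, because it says
  that no nonzero vector of W has N zero coordinates, so this set is also open in the
  Grassmannian topology.
  If |<x,f_k>| = |<y,f_k>| for all k, then every f_k is orthogonal to x - y or to x + y. When
  both are nonzero, full spark allows each to be orthogonal to at most N - 1 of the f_k,
  giving M \<le> 2N - 2.\<close>

lemma real_polynomial_function_finite_zeros:
  fixes p :: "real \<Rightarrow> real"
  assumes "real_polynomial_function p" "p c \<noteq> 0"
  shows "finite {t. p t = 0}"
proof -
  obtain a n where p: "p = (\<lambda>t. \<Sum>i\<le>n. a i * t ^ i)"
    using assms(1) real_polynomial_function_iff_sum by blast
  with assms(2) have "\<exists>k. k \<le> n \<and> a k \<noteq> 0"
    by (metis (no_types, lifting) mult_zero_left sum.neutral atMost_iff)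
  then show ?thesis
    unfolding p by (rule polyfun_rootbound_finite)
qed

lemma closure_nonzero_real_polynomial_function:
  fixes p :: "'a::real_normed_vector \<Rightarrow> real"
  assumes p: "real_polynomial_function p" and "p a \<noteq> 0"
  shows "closure {x. p x \<noteq> 0} = UNIV"
proof -
  have "interior {x. p x = 0} = {}"
  proof (rule ccontr)
    assume "interior {x. p x = 0} \<noteq> {}"
    then obtain g where g: "g \<in> interior {x. p x = 0}" by blast
    define line where "line t = g + t *\<^sub>R (a - g)" for t :: real
    have "polynomial_function line"
      unfolding line_def by (intro polynomial_function_add polynomial_function_const
          polynomial_function_mult polynomial_function_id)
    then have "real_polynomial_function (p \<circ> line)"
      using p by blast
    moreover have "(p \<circ> line) 1 \<noteq> 0"
      using \<open>p a \<noteq> 0\<close> by (simp add: line_def)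
    ultimately have "finite {t. (p \<circ> line) t = 0}"
      by (rule real_polynomial_function_finite_zeros)
    moreover have "line -` interior {x. p x = 0} \<subseteq> {t. (p \<circ> line) t = 0}"
      using interior_subset by fastforce
    ultimately have "finite (line -` interior {x. p x = 0})"
      by (rule finite_subset[rotated])
    moreover have "open (line -` interior {x. p x = 0})"
      unfolding line_def by (intro open_vimage continuous_intros) auto
    moreover have "0 \<in> line -` interior {x. p x = 0}"
      using g by (simp add: line_def)
    ultimately show False
      using finite_imp_not_open by blast
  qed
  then show ?thesis
    using closure_complement[of "{x. p x = 0}"] by (simp add: Compl_eq)
qed

lemma real_polynomial_function_det:
  fixes A :: "'a::real_normed_vector \<Rightarrow> real^'n^'n"
  assumes "\<And>i j. real_polynomial_function (\<lambda>x. A x $ i $ j)"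
  shows "real_polynomial_function (\<lambda>x. det (A x))"
  unfolding det_def using assms
  by (intro real_polynomial_function_sum real_polynomial_function.intros(2,4)
      real_polynomial_function_prod) auto

lemma det_eq_0_iff_left_null:
  fixes A :: "real^'n^'n"
  shows "det A = 0 \<longleftrightarrow> (\<exists>x. x \<noteq> 0 \<and> x v* A = 0)"
  by (metis transpose_transpose det_transpose invertible_det_nz invertible_left_inverse
      matrix_left_invertible_ker vector_transpose_matrix)

definition select_columns :: "('n \<Rightarrow> 'm) \<Rightarrow> real^'m^'n \<Rightarrow> real^'n^'n" where
  "select_columns \<sigma> F = (\<chi> i j. F $ i $ \<sigma> j)"

lemma vector_matrix_mult_select_columns:
  "(x v* select_columns \<sigma> F) $ j = x \<bullet> column (\<sigma> j) F"
  by (simp add: vector_matrix_mult_def select_columns_def column_def inner_vec_def mult.commute)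

lemma det_select_columns_eq_0_iff:
  "det (select_columns \<sigma> F) = 0 \<longleftrightarrow> (\<exists>x. x \<noteq> 0 \<and> (\<forall>j. x \<bullet> column (\<sigma> j) F = 0))"
  by (simp add: det_eq_0_iff_left_null vec_eq_iff vector_matrix_mult_select_columns)

lemma real_polynomial_function_det_select_columns:
  "real_polynomial_function (\<lambda>F::real^'m^'n. det (select_columns \<sigma> F))"
proof (rule real_polynomial_function_det)
  fix i j
  have "bounded_linear (\<lambda>F::real^'m^'n. F $ i $ \<sigma> j)"
    using bounded_linear_compose bounded_linear_vec_nth by blast
  then show "real_polynomial_function (\<lambda>F::real^'m^'n. select_columns \<sigma> F $ i $ j)"
    by (simp add: select_columns_def real_polynomial_function.intros)
qed

definition full_spark :: "real^'m^'n \<Rightarrow> bool" where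
  "full_spark F \<longleftrightarrow> (\<forall>\<sigma>::'n \<Rightarrow> 'm. inj \<sigma> \<longrightarrow> det (select_columns \<sigma> F) \<noteq> 0)"

lemma full_spark_iff_card_orthogonal_columns:
  fixes F :: "real^'m^'n"
  shows "full_spark F \<longleftrightarrow> (\<forall>x. x \<noteq> 0 \<longrightarrow> card {k. x \<bullet> column k F = 0} < CARD('n))"
proof -
  have injections: "(\<exists>\<sigma>::'n \<Rightarrow> 'm. inj \<sigma> \<and> range \<sigma> \<subseteq> Z) \<longleftrightarrow> CARD('n) \<le> card Z"
    for Z :: "'m set"
  proof
    assume "\<exists>\<sigma>::'n \<Rightarrow> 'm. inj \<sigma> \<and> range \<sigma> \<subseteq> Z"
    then show "CARD('n) \<le> card Z"
      by (metis card_image card_mono finite)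
  next
    assume "CARD('n) \<le> card Z"
    then show "\<exists>\<sigma>::'n \<Rightarrow> 'm. inj \<sigma> \<and> range \<sigma> \<subseteq> Z"
      using card_le_inj[of "UNIV::'n set" Z] by auto
  qed
  have "full_spark F \<longleftrightarrow>
      (\<forall>x. x \<noteq> 0 \<longrightarrow> \<not> (\<exists>\<sigma>::'n \<Rightarrow> 'm. inj \<sigma> \<and> range \<sigma> \<subseteq> {k. x \<bullet> column k F = 0}))"
    unfolding full_spark_def det_select_columns_eq_0_iff by blast
  then show ?thesis
    unfolding injections by (simp add: not_le)
qed

lemma open_det_select_columns_neq_0:
  "open {F::real^'m^'n. det (select_columns \<sigma> F) \<noteq> 0}"
  by (intro open_Collect_neq continuous_on_const continuous_at_imp_continuous_on ballI
      continuous_real_polymonial_function real_polynomial_function_det_select_columns)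

lemma closure_det_select_columns_neq_0:
  fixes \<sigma> :: "'n::finite \<Rightarrow> 'm::finite"
  assumes "inj \<sigma>"
  shows "closure {F::real^'m^'n. det (select_columns \<sigma> F) \<noteq> 0} = UNIV"
proof (rule closure_nonzero_real_polynomial_function)
  show "real_polynomial_function (\<lambda>F::real^'m^'n. det (select_columns \<sigma> F))"
    by (rule real_polynomial_function_det_select_columns)
  have "select_columns \<sigma> (\<chi> i k. if k = \<sigma> i then 1 else 0) = mat 1"
    using assms by (auto simp: select_columns_def mat_def vec_eq_iff inj_eq)
  then show "det (select_columns \<sigma> (\<chi> i k. if k = \<sigma> i then 1 else 0)) \<noteq> 0"
    by simp
qed

lemma Collect_full_spark_eq_INT:
  "{F::real^'m^'n. full_spark F} =
    (\<Inter>\<sigma>\<in>{\<sigma>::'n::finite \<Rightarrow> 'm::finite. inj \<sigma>}. {F. det (select_columns \<sigma> F) \<noteq> 0})"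
  unfolding full_spark_def by auto

lemma open_full_spark: "open {F::real^'m^'n. full_spark F}"
  unfolding Collect_full_spark_eq_INT by (simp add: open_INT open_det_select_columns_neq_0)

lemma closure_full_spark: "closure {F::real^'m^'n. full_spark F} = UNIV"
proof -
  have "UNIV \<subseteq> closure (\<Inter>\<sigma>\<in>{\<sigma>::'n::finite \<Rightarrow> 'm::finite. inj \<sigma>}. {F::real^'m^'n. det (select_columns \<sigma> F) \<noteq> 0})"
    by (intro Baire) (auto simp: open_det_select_columns_neq_0 closure_det_select_columns_neq_0)
  then show ?thesis
    unfolding Collect_full_spark_eq_INT by auto
qed

lemma is_frame_orthogonal_columns_imp_zero:
  fixes F :: "real^'m^'n"
  assumes "is_frame F" "\<And>k. x \<bullet> column k F = 0"
  shows "x = 0"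
proof -
  have "orthogonal x x"
    by (rule orthogonal_to_span[of x "range (\<lambda>k. column k F)"])
       (use assms in \<open>auto simp: is_frame_def orthogonal_def\<close>)
  then show ?thesis
    by (simp add: orthogonal_def)
qed

lemma full_spark_imp_is_frame:
  fixes F :: "real^'m^'n"
  assumes "CARD('n) \<le> CARD('m)" "full_spark F"
  shows "is_frame F"
proof (rule ccontr)
  assume "\<not> is_frame F"
  then have "span (range (\<lambda>k. column k F)) \<subset> span UNIV"
    unfolding is_frame_def by auto
  then obtain x :: "real^'n" where "x \<noteq> 0"
    and "\<And>y. y \<in> span (range (\<lambda>k. column k F)) \<Longrightarrow> orthogonal x y"
    by (rule orthogonal_to_subspace_exists_gen) auto
  then have "{k. x \<bullet> column k F = 0} = UNIV"
    by (auto simp: orthogonal_def span_base)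
  with assms \<open>x \<noteq> 0\<close> show False
    by (auto simp: full_spark_iff_card_orthogonal_columns)
qed

lemma full_spark_coeff_range_eq:
  fixes F G :: "real^'m^'n"
  assumes "full_spark F" "is_frame G" "coeff_range G = coeff_range F"
  shows "full_spark G"
  unfolding full_spark_iff_card_orthogonal_columns
proof (intro allI impI)
  fix x :: "real^'n"
  assume "x \<noteq> 0"
  have "(\<chi> k. x \<bullet> column k G) \<in> coeff_range F"
    using assms(3) unfolding coeff_range_def by auto
  then obtain y where "(\<chi> k. x \<bullet> column k G) = (\<chi> k. y \<bullet> column k F)"
    unfolding coeff_range_def by auto
  then have same: "\<And>k. x \<bullet> column k G = y \<bullet> column k F"
    by (simp add: vec_eq_iff)
  then have "y \<noteq> 0"
    using is_frame_orthogonal_columns_imp_zero[OF assms(2)] \<open>x \<noteq> 0\<close> by force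
  with assms(1) show "card {k. x \<bullet> column k G = 0} < CARD('n)"
    unfolding same full_spark_iff_card_orthogonal_columns by blast
qed

lemma frame_open_full_spark:
  assumes "CARD('n) \<le> CARD('m)"
  shows "frame_open {F::real^'m^'n. full_spark F}"
  unfolding frame_open_def
proof (intro conjI ballI impI)
  show subset: "{F::real^'m^'n. full_spark F} \<subseteq> frames"
    using full_spark_imp_is_frame[OF assms] by (auto simp: frames_def)
  show "openin (top_of_set frames) {F::real^'m^'n. full_spark F}"
    using open_full_spark subset by (auto simp: openin_open)
next
  fix F G :: "real^'m^'n"
  assume "F \<in> {F. full_spark F}" "G \<in> frames" "coeff_range G = coeff_range F"
  then show "G \<in> {F. full_spark F}"
    using full_spark_coeff_range_eq by (auto simp: frames_def)
qed

lemma frame_dense_if_closure_eq_UNIV: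
  fixes U :: "(real^'m^'n) set"
  assumes "U \<subseteq> frames" "closure U = UNIV"
  shows "frame_dense U"
  unfolding frame_dense_def
proof (intro allI impI)
  fix V :: "(real^'m^'n) set"
  assume "frame_open V \<and> V \<noteq> {}"
  then obtain F where "F \<in> V" "openin (top_of_set frames) V"
    unfolding frame_open_def by blast
  then obtain e where "e > 0" and ball: "\<And>G. G \<in> frames \<Longrightarrow> dist G F < e \<Longrightarrow> G \<in> V"
    unfolding openin_euclidean_subtopology_iff by blast
  then obtain G where "G \<in> U" "dist G F < e"
    using assms(2) closure_approachable[of F U] by blast
  with assms(1) ball show "U \<inter> V \<noteq> {}"
    by blast
qed

lemma frame_dense_full_spark:
  assumes "CARD('n) \<le> CARD('m)"
  shows "frame_dense {F::real^'m^'n. full_spark F}"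
  using full_spark_imp_is_frame[OF assms] closure_full_spark
  by (intro frame_dense_if_closure_eq_UNIV) (auto simp: frames_def)

lemma full_spark_phase_retrieval:
  fixes F :: "real^'m^'n"
  assumes "2 * CARD('n) - 1 \<le> CARD('m)" "full_spark F"
    and "\<And>k. \<bar>x \<bullet> column k F\<bar> = \<bar>y \<bullet> column k F\<bar>"
  shows "y = x \<or> y = - x"
proof (rule ccontr)
  let ?S = "{k. (x - y) \<bullet> column k F = 0}" and ?T = "{k. (x + y) \<bullet> column k F = 0}"
  assume "\<not> (y = x \<or> y = - x)"
  then have "x - y \<noteq> 0" "x + y \<noteq> 0"
    by (auto simp: add_eq_0_iff)
  with assms(2) have "card ?S < CARD('n)" "card ?T < CARD('n)"
    unfolding full_spark_iff_card_orthogonal_columns by blast+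
  moreover have "k \<in> ?S \<union> ?T" for k
  proof -
    have "x \<bullet> column k F = y \<bullet> column k F \<or> x \<bullet> column k F = - (y \<bullet> column k F)"
      using assms(3)[of k] by arith
    then show ?thesis
      by (auto simp: inner_diff_left inner_add_left)
  qed
  then have "CARD('m) \<le> card ?S + card ?T"
    by (metis UNIV_eq_I card_Un_le)
  ultimately show False
    using assms(1) by linarith
qed

theorem theorem2p2:
  assumes "CARD('m::finite) \<ge> 2 * CARD('n::finite) - 1"
  shows "\<exists>U :: (real^'m^'n) set. frame_open U \<and> frame_dense U \<and>
           (\<forall>F\<in>U. \<forall>x y :: real^'n.
              (\<forall>k. \<bar>x \<bullet> column k F\<bar> = \<bar>y \<bullet> column k F\<bar>) \<longrightarrow> y = x \<or> y = - x)"
proof -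
  have "0 < CARD('n)"
    by simp
  with assms have "CARD('n) \<le> CARD('m)"
    by linarith
  then show ?thesis
    using frame_open_full_spark frame_dense_full_spark full_spark_phase_retrieval[OF assms]
    by blast
qed

end
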